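(* For every PTM $M$, the probabilistic function $CF_M:\mathbb{N}\to\mathcal D(\mathbb{N})$ defined by $CF_M(x)(y)=PT_M(x,y)=2^{-|\overline y|}$ if $y$ is a leaf of $CT_M(x)$ and $CF_M(x)(y)=0$ otherwise, satisfies $CF_M=\mu(PTC_M)$; in particular $CF_M\in\mathscr{PR}$.
   Context: PTM: Turing machine with two transition functions $\delta_0,\delta_1$ (each applied with probability $1/2$) defined on non-final configurations; initial configuration on input string $w=a\cdot v$ is $\langle\varepsilon,a,v,q_s\rangle$; final configurations are $\langle s,a,\varepsilon,q\rangle$ with $q$ final. $n\mapsto\overline n$ is the length-lexicographic bijection $\mathbb{N}\to\{0,1\}^*$ ($\overline0=\varepsilon,\overline1=0,\overline2=1,\overline3=00,\dots$). Computation tree $CT_M(x)$: nodes are binary strings, root $\varepsilon$ labelled by the initial configuration on $\overline x$, a node $b$ labelled by a non-final $C$ has children $b0,b1$ labelled $\delta_0(C),\delta_1(C)$, nodes labelled by final configurations have no children; $y\in\mathbb{N}$ denotes node $\overline y$, a leaf if it is in the tree with final label. $PT_M(x,y)=2^{-|\overline y|}$. Recursively in $y$: if $y$ is not a leaf, $PT^1_M(x,y)=1$, $PT^0_M(x,y)=0$; otherwise $PT^0_M(x,y)=PT_M(x,y)/\prod_{k<y}PT^1_M(x,k)$ and $PT^1_M(x,y)=1-PT^0_M(x,y)$. $PTC_M(x,y)(0)=PT^0_M(x,y)$, $PTC_M(x,y)(1)=PT^1_M(x,y)$, $PTC_M(x,y)(z)=0$ for $z\ge2$. Minimization: $\mu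 f(\vec x)(y)=f(\vec x,y)(0)\prod_{z<y}\sum_{k>0}f(\vec x,z)(k)$. $\mathcal D(X)$: functions $X\to[0,1]$ with sum $\le1$. $\mathscr{PR}$ is the smallest class of functions $\mathbb{N}^k\to\mathcal D(\mathbb{N})$ containing $z(n)(0)=1$, $s(n)(n+1)=1$, $\Pi^n_m(\vec k)(k_m)=1$, $r(x)(x)=r(x)(x+1)=1/2$ (other values $0$) and closed under generalized composition $(f\odot(g_1,\dots,g_n))(\vec x)(y)=\sum_{\vec z} f(\vec z)(y)\prod_i g_i(\vec x)(z_i)$, primitive recursion ($h(\vec x,0)=f(\vec x)$, $h(\vec x,y+1)(w)=\sum_z h(\vec x,y)(z)g(\vec x,y,z)(w)$) and minimization. *)

theory Defs
  imports "HOL-Analysis.Analysis"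
begin

text \<open>Bits: False = 0, True = 1. bin 0 = [], bin 1 = [0], bin 2 = [1], bin 3 = [0,0], ...\<close>
fun bin :: "nat \<Rightarrow> bool list" where
  "bin 0 = []"
| "bin (Suc n) = bin (n div 2) @ [odd n]"

datatype move = MoveL | MoveR | Stay

record ('q, 's) ptm =
  blank  :: 's
  bitsym :: "bool \<Rightarrow> 's"
  start  :: 'q
  finals :: "'q set"
  delta0 :: "'q \<Rightarrow> 's \<Rightarrow> 'q \<times> 's \<times> move"
  delta1 :: "'q \<Rightarrow> 's \<Rightarrow> 'q \<times> 's \<times> move"

definition is_ptm :: "('q, 's) ptm \<Rightarrow> bool" where
  "is_ptm M \<longleftrightarrow> inj (bitsym M) \<and> blank M \<notin> range (bitsym M)"

text \<open>Configuration <s, a, v, q>: tape left of the head (left to right), scanned symbol,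
  tape right of the head, state.\<close>
type_synonym ('q, 's) conf = "'s list \<times> 's \<times> 's list \<times> 'q"

definition init_conf :: "('q, 's) ptm \<Rightarrow> bool list \<Rightarrow> ('q, 's) conf" where
  "init_conf M w = (case w of
      [] \<Rightarrow> ([], blank M, [], start M)
    | a # v \<Rightarrow> ([], bitsym M a, map (bitsym M) v, start M))"

definition final_conf :: "('q, 's) ptm \<Rightarrow> ('q, 's) conf \<Rightarrow> bool" where
  "final_conf M C = (case C of (s, a, v, q) \<Rightarrow> v = [] \<and> q \<in> finals M)"

definition apply_tr :: "('q, 's) ptm \<Rightarrow> ('q \<times> 's \<times> move) \<Rightarrow> ('q, 's) conf \<Rightarrow> ('q, 's) conf" where
  "apply_tr M t C = (case C of (s, a, v, q) \<Rightarrow> (case t of (q', b, m) \<Rightarrow>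
     (case m of
        Stay \<Rightarrow> (s, b, v, q')
      | MoveR \<Rightarrow> (s @ [b], (case v of [] \<Rightarrow> blank M | c # _ \<Rightarrow> c), tl v, q')
      | MoveL \<Rightarrow> (if s = [] then ([], blank M, b # v, q') else (butlast s, last s, b # v, q')))))"

definition step :: "('q, 's) ptm \<Rightarrow> bool \<Rightarrow> ('q, 's) conf \<Rightarrow> ('q, 's) conf" where
  "step M i C = (case C of (s, a, v, q) \<Rightarrow>
     apply_tr M (if i then delta1 M q a else delta0 M q a) C)"

text \<open>Label of node bs in CT_M(x); None if bs is not a node of the tree.\<close>
definition label :: "('q, 's) ptm \<Rightarrow> nat \<Rightarrow> bool list \<Rightarrow> ('q, 's) conf option" where
  "label M x bs = foldl (\<lambda>oc i. case oc of None \<Rightarrow> None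
        | Some C \<Rightarrow> if final_conf M C then None else Some (step M i C))
     (Some (init_conf M (bin x))) bs"

definition leaf :: "('q, 's) ptm \<Rightarrow> nat \<Rightarrow> nat \<Rightarrow> bool" where
  "leaf M x y \<longleftrightarrow> (\<exists>C. label M x (bin y) = Some C \<and> final_conf M C)"

definition PT :: "nat \<Rightarrow> real" where
  "PT y = 2 powi (- int (length (bin y)))"

text \<open>PTprod M x y = prod_{k<y} PT^1_M(x,k), computed together with PT^0, PT^1.\<close>
fun PTprod :: "('q, 's) ptm \<Rightarrow> nat \<Rightarrow> nat \<Rightarrow> real" where
  "PTprod M x 0 = 1"
| "PTprod M x (Suc y) = PTprod M x y *
     (if leaf M x y then 1 - PT y / PTprod M x y else 1)"

definition PT0 :: "('q, 's) ptm \<Rightarrow> nat \<Rightarrow> nat \<Rightarrow> real" where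
  "PT0 M x y = (if leaf M x y then PT y / PTprod M x y else 0)"

definition PT1 :: "('q, 's) ptm \<Rightarrow> nat \<Rightarrow> nat \<Rightarrow> real" where
  "PT1 M x y = (if leaf M x y then 1 - PT0 M x y else 1)"

lemma PTprod_eq: "PTprod M x y = (\<Prod>k<y. PT1 M x k)"
  by (induction y) (simp_all add: PT1_def PT0_def)

definition PTC :: "('q, 's) ptm \<Rightarrow> nat \<Rightarrow> nat \<Rightarrow> nat \<Rightarrow> real" where
  "PTC M x y z = (if z = 0 then PT0 M x y else if z = 1 then PT1 M x y else 0)"

definition CF :: "('q, 's) ptm \<Rightarrow> nat \<Rightarrow> nat \<Rightarrow> real" where
  "CF M x y = (if leaf M x y then PT y else 0)"

text \<open>A k-ary function N^k -> D(N) is represented as nat list => nat => real; only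
  arguments of length k are meaningful.\<close>

definition comp_pf :: "(nat list \<Rightarrow> nat \<Rightarrow> real) \<Rightarrow> (nat list \<Rightarrow> nat \<Rightarrow> real) list
    \<Rightarrow> nat list \<Rightarrow> nat \<Rightarrow> real" where
  "comp_pf f gs xs y = (\<Sum>\<^sub>\<infinity>zs\<in>{zs. length zs = length gs}.
      f zs y * (\<Prod>i<length gs. (gs ! i) xs (zs ! i)))"

fun prec_aux :: "(nat list \<Rightarrow> nat \<Rightarrow> real) \<Rightarrow> (nat list \<Rightarrow> nat \<Rightarrow> real)
    \<Rightarrow> nat list \<Rightarrow> nat \<Rightarrow> nat \<Rightarrow> real" where
  "prec_aux f g xs 0 = f xs"
| "prec_aux f g xs (Suc y) = (\<lambda>w. \<Sum>\<^sub>\<infinity>z\<in>UNIV. prec_aux f g xs y z * g (xs @ [y, z]) w)"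

definition prec_pf :: "(nat list \<Rightarrow> nat \<Rightarrow> real) \<Rightarrow> (nat list \<Rightarrow> nat \<Rightarrow> real)
    \<Rightarrow> nat list \<Rightarrow> nat \<Rightarrow> real" where
  "prec_pf f g xs = prec_aux f g (butlast xs) (last xs)"

definition mu_pf :: "(nat list \<Rightarrow> nat \<Rightarrow> real) \<Rightarrow> nat list \<Rightarrow> nat \<Rightarrow> real" where
  "mu_pf f xs y = f (xs @ [y]) 0 * (\<Prod>z<y. \<Sum>\<^sub>\<infinity>k\<in>{0<..}. f (xs @ [z]) k)"

inductive PR :: "nat \<Rightarrow> (nat list \<Rightarrow> nat \<Rightarrow> real) \<Rightarrow> bool" where
  zero: "PR 1 (\<lambda>xs y. if y = 0 then 1 else 0)"
| succ: "PR 1 (\<lambda>xs y. if y = hd xs + 1 then 1 else 0)"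
| proj: "1 \<le> m \<Longrightarrow> m \<le> n \<Longrightarrow> PR n (\<lambda>xs y. if y = xs ! (m - 1) then 1 else 0)"
| rand: "PR 1 (\<lambda>xs y. if y = hd xs \<or> y = hd xs + 1 then 1 / 2 else 0)"
| comp: "PR (length gs) f \<Longrightarrow> (\<forall>g\<in>set gs. PR k g) \<Longrightarrow> PR k (comp_pf f gs)"
| prim: "PR k f \<Longrightarrow> PR (k + 2) g \<Longrightarrow> PR (k + 1) (prec_pf f g)"
| mini: "PR (k + 1) f \<Longrightarrow> PR k (mu_pf f)"
| ext:  "PR k f \<Longrightarrow> (\<forall>xs. length xs = k \<longrightarrow> g xs = f xs) \<Longrightarrow> PR k g"

end

theory Submission
  imports Defs
begin

(* By definition mu(PTC_M)(x)(y) = PT0(x,y) * prod_{z<y} PT1(x,z), and the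
   product telescopes: it equals 1 minus the mass 2^-|bin k| of the leaves k < y.  The leaves of a
   computation tree form a prefix-free set of binary words, so Kraft's inequality shows that this
   product is at least PT(y) > 0 whenever y is a leaf; hence PT0(x,y) * prod = PT(y) = CF_M(x)(y).

   By closure under minimization it suffices to show PTC_M in PR.  We first
   show that every total function N^k -> N built from zero, successor and projections by
   composition and primitive recursion is in PR as a Dirac distribution ("deterministic"); this
   yields arithmetic, decidable predicates, bounded sums and finite tables.  Arithmetizing the
   machine (configurations coded as numbers, one transition step as an arithmetic function)
   makes the leaf predicate deterministic.  For a leaf y, PT0(x,y) = 1/N with a natural number
   N computable from x and y.  Finally PTC_M is sampled by drawing a geometric random t with
   probability 2^-(t+1) (the minimization of a fair coin) and returning the complement of the
   (t+1)-st binary digit of 1/N: outcome 0 then has probability exactly 1/N. *)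

section \<open>The identity CF = mu(PTC)\<close>

lemma bin_eq_imp_eq: "bin a = bin b \<Longrightarrow> a = b"
proof (induction a arbitrary: b rule: less_induct)
  case (less a)
  show ?case
  proof (cases a)
    case 0
    then show ?thesis using less.prems by (cases b) auto
  next
    case (Suc n)
    then obtain m where b: "b = Suc m" using less.prems by (cases b) auto
    then have "bin (n div 2) = bin (m div 2)" "odd n = odd m" using less.prems Suc by auto
    then have "n div 2 = m div 2" using less.IH Suc by auto
    moreover have "n mod 2 = m mod 2" using \<open>odd n = odd m\<close>
      by (cases "odd n") (auto simp: odd_iff_mod_2_eq_one even_iff_mod_2_eq_zero)
    ultimately have "n = m" using div_mult_mod_eq[of n 2] div_mult_mod_eq[of m 2] by linarith
    then show ?thesis using Suc b by simp
  qed
qed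

lemma inj_bin: "inj bin" by (auto intro: injI bin_eq_imp_eq)

lemma PT_eq: "PT y = (1/2) ^ length (bin y)"
  by (simp add: PT_def power_int_minus power_int_of_nat power_one_over inverse_eq_divide)

lemma PT_pos: "PT y > 0" by (simp add: PT_eq)

definition prefix_free :: "'a list set \<Rightarrow> bool" where
  "prefix_free A \<longleftrightarrow> (\<forall>u\<in>A. \<forall>v\<in>A. \<forall>r. v = u @ r \<longrightarrow> r = [])"

lemma prefix_free_tails: "prefix_free A \<Longrightarrow> prefix_free {w. c # w \<in> A}"
  unfolding prefix_free_def by (metis append_Cons mem_Collect_eq)

lemma prefix_free_subset: "A \<subseteq> B \<Longrightarrow> prefix_free B \<Longrightarrow> prefix_free A"
  unfolding prefix_free_def by blast

lemma split_first_bit: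
  assumes "[] \<notin> A"
  shows "A = Cons False ` {w. False # w \<in> A} \<union> Cons True ` {w. True # w \<in> A}"
proof
  show "A \<subseteq> Cons False ` {w. False # w \<in> A} \<union> Cons True ` {w. True # w \<in> A}"
  proof
    fix w assume "w \<in> A"
    then obtain c w' where "w = c # w'" using assms by (cases w) auto
    then show "w \<in> Cons False ` {w. False # w \<in> A} \<union> Cons True ` {w. True # w \<in> A}"
      using \<open>w \<in> A\<close> by (cases c) auto
  qed
qed auto

text \<open>Kraft's inequality for words of length at most n, by induction on n: splitting by
  the first letter halves the weights of two prefix-free sets of shorter words.\<close>
lemma kraft_bounded:
  fixes A :: "bool list set"
  assumes "finite A" "prefix_free A" "\<forall>w\<in>A. length w \<le> n"
  shows "(\<Sum>w\<in>A. (1/2::real) ^ length w) \<le> 1"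
  using assms
proof (induction n arbitrary: A)
  case 0
  then have "A = {} \<or> A = {[]}" by auto
  then show ?case by auto
next
  case (Suc n)
  show ?case
  proof (cases "[] \<in> A")
    case True
    then have "A = {[]}" using Suc.prems(2) unfolding prefix_free_def by force
    then show ?thesis by simp
  next
    case False
    define T where "T c = {w. c # w \<in> A}" for c
    have fin: "finite (T c)" for c
      unfolding T_def using finite_vimageI[OF Suc.prems(1), of "Cons c"] by (simp add: vimage_def)
    have half: "(\<Sum>w\<in>T c. (1/2::real) ^ length w) \<le> 1" for c
      using Suc.prems by (intro Suc.IH fin) (auto simp: T_def prefix_free_tails)
    have "(\<Sum>w\<in>A. (1/2::real) ^ length w)
        = (\<Sum>w\<in>Cons False ` T False. (1/2::real) ^ length w) + (\<Sum>w\<in>Cons True ` T True. (1/2) ^ length w)"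
      unfolding T_def by (subst split_first_bit[OF False]) (rule sum.union_disjoint, use fin[unfolded T_def] in auto)
    also have "\<dots> = (1/2) * (\<Sum>w\<in>T False. (1/2::real) ^ length w) + (1/2) * (\<Sum>w\<in>T True. (1/2) ^ length w)"
      by (simp add: sum.reindex sum_distrib_left)
    also have "\<dots> \<le> (1/2) * 1 + (1/2) * 1"
      using half by (intro add_mono mult_left_mono) auto
    finally show ?thesis by simp
  qed
qed

lemma kraft_inequality:
  fixes A :: "bool list set"
  assumes "finite A" "prefix_free A"
  shows "(\<Sum>w\<in>A. (1/2::real) ^ length w) \<le> 1"
  using assms by (intro kraft_bounded[where n="Max (length ` A)"]) auto

definition label_step :: "('q, 's) ptm \<Rightarrow> ('q, 's) conf option \<Rightarrow> bool \<Rightarrow> ('q, 's) conf option" where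
  "label_step M oc i = (case oc of None \<Rightarrow> None
        | Some C \<Rightarrow> if final_conf M C then None else Some (step M i C))"

lemma label_foldl: "label M x bs = foldl (label_step M) (Some (init_conf M (bin x))) bs"
  unfolding label_def label_step_def ..

lemma label_step_None: "label_step M None i = None" by (simp add: label_step_def)

lemma foldl_label_step_None: "foldl (label_step M) None bs = None"
  by (induction bs) (auto simp: label_step_None)

text \<open>A final configuration has no children, so no node lies strictly below a leaf.\<close>
lemma label_after_final:
  assumes "label M x bs = Some C" "final_conf M C"
  shows "label M x (bs @ b # rest) = None"
  using assms unfolding label_foldl by (simp add: label_step_def foldl_label_step_None)

lemma prefix_free_leaves: "prefix_free (bin ` {y. leaf M x y})"
  unfolding prefix_free_def
proof (intro ballI allI impI)
  fix u v r assume "u \<in> bin ` {y. leaf M x y}" "v \<in> bin ` {y. leaf M x y}" and uv: "v = u @ r"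
  then obtain k k' where k: "leaf M x k" "u = bin k" and k': "leaf M x k'" "v = bin k'" by auto
  show "r = []"
  proof (rule ccontr)
    assume "r \<noteq> []"
    then obtain b rest where r: "r = b # rest" by (cases r) auto
    obtain C where "label M x (bin k) = Some C" "final_conf M C" using k(1) by (auto simp: leaf_def)
    then have "label M x (bin k') = None" using label_after_final uv k k' r by simp
    then show False using k'(1) by (simp add: leaf_def)
  qed
qed

definition leaf_mass :: "('q, 's) ptm \<Rightarrow> nat \<Rightarrow> nat \<Rightarrow> real" where
  "leaf_mass M x y = (\<Sum>k<y. if leaf M x k then PT k else 0)"

lemma kraft_leaves:
  assumes "leaf M x y"
  shows "leaf_mass M x y + PT y \<le> 1"
proof -
  define L where "L = insert y {k\<in>{..<y}. leaf M x k}"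
  have L: "finite L" "L \<subseteq> {y. leaf M x y}" unfolding L_def using assms by auto
  have "leaf_mass M x y = (\<Sum>k\<in>{k\<in>{..<y}. leaf M x k}. PT k)"
    unfolding leaf_mass_def by (rule sum.inter_filter[symmetric]) simp
  then have "leaf_mass M x y + PT y = (\<Sum>k\<in>L. PT k)" unfolding L_def by simp
  also have "\<dots> = (\<Sum>w\<in>bin ` L. (1/2::real) ^ length w)"
    using inj_on_subset[OF inj_bin, of L] by (simp add: sum.reindex PT_eq)
  also have "\<dots> \<le> 1"
  proof (rule kraft_inequality)
    show "prefix_free (bin ` L)"
      by (rule prefix_free_subset[OF _ prefix_free_leaves]) (use L in blast)
  qed (use L in simp)
  finally show ?thesis .
qed

text \<open>The product of the PT1 values telescopes to the mass not yet taken by earlier leaves.\<close>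
lemma PTprod_leaf_mass: "PTprod M x y = 1 - leaf_mass M x y"
proof (induction y)
  case 0 then show ?case by (simp add: leaf_mass_def)
next
  case (Suc y)
  show ?case
  proof (cases "leaf M x y")
    case True
    have "PTprod M x y \<ge> PT y" using kraft_leaves[OF True] Suc by simp
    then have "PTprod M x y \<noteq> 0" using PT_pos[of y] by linarith
    then have "PTprod M x (Suc y) = PTprod M x y - PT y" using True by (simp add: right_diff_distrib)
    then show ?thesis using Suc True by (simp add: leaf_mass_def)
  next
    case False
    then show ?thesis using Suc by (simp add: leaf_mass_def)
  qed
qed

lemma PTprod_ge: "leaf M x y \<Longrightarrow> PTprod M x y \<ge> PT y"
  using kraft_leaves[of M x y] PTprod_leaf_mass[of M x y] by simp

lemma PTprod_nonzero: "leaf M x y \<Longrightarrow> PTprod M x y \<noteq> 0"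
  using PTprod_ge[of M x y] PT_pos[of y] by linarith

lemma infsum_single:
  fixes f :: "'a \<Rightarrow> real"
  assumes "a \<in> A" "\<And>x. x \<in> A \<Longrightarrow> x \<noteq> a \<Longrightarrow> f x = 0"
  shows "infsum f A = f a"
proof -
  have "infsum f A = infsum f {a}"
    by (rule infsum_cong_neutral) (use assms in auto)
  then show ?thesis by simp
qed

lemma CF_eq_mu_PTC: "CF M x = mu_pf (\<lambda>xs. PTC M (xs ! 0) (xs ! 1)) [x]"
proof
  fix y
  have PT1: "(\<Sum>\<^sub>\<infinity>k\<in>{0<..}. PTC M x z k) = PT1 M x z" for z
    by (subst infsum_single[where a=1]) (auto simp: PTC_def)
  have "mu_pf (\<lambda>xs. PTC M (xs ! 0) (xs ! 1)) [x] y = PT0 M x y * (\<Prod>z<y. PT1 M x z)"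
    unfolding mu_pf_def by (simp add: PT1 PTC_def)
  also have "\<dots> = PT0 M x y * PTprod M x y" by (simp add: PTprod_eq)
  also have "\<dots> = CF M x y"
    using PTprod_nonzero[of M x y] by (simp add: PT0_def CF_def)
  finally show "CF M x y = mu_pf (\<lambda>xs. PTC M (xs ! 0) (xs ! 1)) [x] y" ..
qed

section \<open>Deterministic functions in PR\<close>

text \<open>A total function f : N^k -> N is identified with the probabilistic function returning the
  Dirac distribution at f; we call f deterministic of arity k if this function is in PR.\<close>
definition dirac :: "nat \<Rightarrow> nat \<Rightarrow> real" where "dirac a y = (if y = a then 1 else 0)"

definition det :: "nat \<Rightarrow> (nat list \<Rightarrow> nat) \<Rightarrow> bool" where
  "det k f \<longleftrightarrow> PR k (\<lambda>xs. dirac (f xs))"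

lemma det_ext: "det k f \<Longrightarrow> (\<And>xs. length xs = k \<Longrightarrow> g xs = f xs) \<Longrightarrow> det k g"
  unfolding det_def by (erule PR.ext) auto

lemma det_zero1: "det 1 (\<lambda>xs. 0)"
  unfolding det_def dirac_def using PR.zero by (simp add: eq_commute)

lemma det_succ1: "det 1 (\<lambda>xs. Suc (hd xs))"
  unfolding det_def dirac_def using PR.succ by simp

lemma det_proj: "i < n \<Longrightarrow> det n (\<lambda>xs. xs ! i)"
  unfolding det_def dirac_def using PR.proj[of "Suc i" n] by simp

lemma prod_dirac:
  assumes "length zs = length gs"
  shows "(\<Prod>i<length gs. dirac ((gs ! i) xs) (zs ! i)) = (if zs = map (\<lambda>g. g xs) gs then 1 else 0)"
proof (cases "zs = map (\<lambda>g. g xs) gs")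
  case True then show ?thesis by (simp add: dirac_def)
next
  case False
  have "\<exists>i<length gs. zs ! i \<noteq> (gs ! i) xs"
  proof (rule ccontr)
    assume "\<not> (\<exists>i<length gs. zs ! i \<noteq> (gs ! i) xs)"
    then have "zs = map (\<lambda>g. g xs) gs" using assms by (intro nth_equalityI) auto
    with False show False by simp
  qed
  then obtain i where i: "i < length gs" "zs ! i \<noteq> (gs ! i) xs" by blast
  then have "dirac ((gs ! i) xs) (zs ! i) = 0" by (simp add: dirac_def)
  then have "(\<Prod>i<length gs. dirac ((gs ! i) xs) (zs ! i)) = 0"
    using i by (intro prod_zero) auto
  then show ?thesis using False by simp
qed

lemma det_comp:
  assumes "det (length gs) f" "\<forall>g\<in>set gs. det k g"
  shows "det k (\<lambda>xs. f (map (\<lambda>g. g xs) gs))"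
proof -
  let ?F = "comp_pf (\<lambda>xs. dirac (f xs)) (map (\<lambda>g xs. dirac (g xs)) gs)"
  have "PR k ?F"
    using assms unfolding det_def by (intro PR.comp) auto
  moreover have "?F = (\<lambda>xs. dirac (f (map (\<lambda>g. g xs) gs)))"
  proof (intro HOL.ext)
    fix xs :: "nat list" and y :: nat
    have "?F xs y = (\<Sum>\<^sub>\<infinity>zs\<in>{zs. length zs = length gs}.
                 dirac (f zs) y * (\<Prod>i<length gs. dirac ((gs ! i) xs) (zs ! i)))"
      unfolding comp_pf_def by simp
    also have "\<dots> = (\<Sum>\<^sub>\<infinity>zs\<in>{zs. length zs = length gs}.
                 dirac (f zs) y * (if zs = map (\<lambda>g. g xs) gs then 1 else 0))"
      by (rule infsum_cong) (simp add: prod_dirac)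
    also have "\<dots> = dirac (f (map (\<lambda>g. g xs) gs)) y"
      by (subst infsum_single[where a="map (\<lambda>g. g xs) gs"]) auto
    finally show "?F xs y = dirac (f (map (\<lambda>g. g xs) gs)) y" .
  qed
  ultimately show ?thesis unfolding det_def by simp
qed

fun natrec :: "nat \<Rightarrow> (nat \<Rightarrow> nat \<Rightarrow> nat) \<Rightarrow> nat \<Rightarrow> nat" where
  "natrec a s 0 = a"
| "natrec a s (Suc n) = s n (natrec a s n)"

lemma prec_aux_dirac:
  "prec_aux (\<lambda>xs. dirac (f xs)) (\<lambda>xs. dirac (g xs)) xs n = dirac (natrec (f xs) (\<lambda>i r. g (xs @ [i, r])) n)"
proof (induction n)
  case 0 then show ?case by simp
next
  case (Suc n)
  show ?case
  proof
    fix w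
    show "prec_aux (\<lambda>xs. dirac (f xs)) (\<lambda>xs. dirac (g xs)) xs (Suc n) w
        = dirac (natrec (f xs) (\<lambda>i r. g (xs @ [i, r])) (Suc n)) w"
      by (simp add: Suc, subst infsum_single[where a="natrec (f xs) (\<lambda>i r. g (xs @ [i, r])) n"])
         (auto simp: dirac_def)
  qed
qed

lemma det_prim:
  assumes "det k f" "det (Suc (Suc k)) g"
  shows "det (Suc k) (\<lambda>xs. natrec (f (butlast xs)) (\<lambda>i r. g (butlast xs @ [i, r])) (last xs))"
proof -
  have "PR (k+1) (prec_pf (\<lambda>xs. dirac (f xs)) (\<lambda>xs. dirac (g xs)))"
    using assms unfolding det_def by (intro PR.prim) auto
  moreover have "prec_pf (\<lambda>xs. dirac (f xs)) (\<lambda>xs. dirac (g xs))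
      = (\<lambda>xs. dirac (natrec (f (butlast xs)) (\<lambda>i r. g (butlast xs @ [i, r])) (last xs)))"
    by (rule HOL.ext) (simp only: prec_pf_def prec_aux_dirac)
  ultimately show ?thesis unfolding det_def by simp
qed

lemma det_take:
  assumes "det k f" "k \<le> m"
  shows "det m (\<lambda>ys. f (take k ys))"
proof -
  have "det m (\<lambda>ys. f (map (\<lambda>g. g ys) (map (\<lambda>i ys. ys ! i) [0..<k])))"
    by (rule det_comp) (use assms det_proj in auto)
  then show ?thesis
    by (rule det_ext) (use assms in \<open>auto intro!: nth_equalityI arg_cong[where f=f]\<close>)
qed

lemma det_suc: "det k f \<Longrightarrow> det k (\<lambda>xs. Suc (f xs))"
  using det_comp[of "[f]" "\<lambda>xs. Suc (hd xs)" k] det_succ1 by simp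

lemma det_const0: "0 < k \<Longrightarrow> det k (\<lambda>xs. 0)"
  using det_comp[of "[\<lambda>xs. xs ! 0]" "\<lambda>xs. 0" k] det_zero1 det_proj[of 0 k] by simp

lemma det_const: "0 < k \<Longrightarrow> det k (\<lambda>xs. c)"
  by (induction c) (auto intro: det_const0 det_suc)

lemma det_natrec_append:
  assumes "det k a" "det (Suc (Suc k)) s" "det k n"
  shows "det k (\<lambda>xs. natrec (a xs) (\<lambda>i r. s (xs @ [i, r])) (n xs))"
proof -
  have h: "det (Suc k) (\<lambda>ys. natrec (a (butlast ys)) (\<lambda>i r. s (butlast ys @ [i, r])) (last ys))"
    by (rule det_prim) (use assms in auto)
  have "det k (\<lambda>xs. (\<lambda>ys. natrec (a (butlast ys)) (\<lambda>i r. s (butlast ys @ [i, r])) (last ys))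
                 (map (\<lambda>g. g xs) (map (\<lambda>i ys. ys ! i) [0..<k] @ [n])))"
    by (rule det_comp) (use h assms det_proj in auto)
  then show ?thesis
  proof (rule det_ext)
    fix xs :: "nat list" assume "length xs = k"
    then have "map (\<lambda>g. g xs) (map (\<lambda>i ys. ys ! i) [0..<k] @ [n]) = xs @ [n xs]"
      by (auto intro!: nth_equalityI simp: nth_append)
    then show "natrec (a xs) (\<lambda>i r. s (xs @ [i, r])) (n xs) =
      (\<lambda>ys. natrec (a (butlast ys)) (\<lambda>i r. s (butlast ys @ [i, r])) (last ys))
                 (map (\<lambda>g. g xs) (map (\<lambda>i ys. ys ! i) [0..<k] @ [n]))" by simp
  qed
qed

lemma det_natrec:
  assumes "det k a" "det (Suc (Suc k)) (\<lambda>ys. S (take k ys) (ys ! k) (ys ! Suc k))" "det k n"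
  shows "det k (\<lambda>xs. natrec (a xs) (S xs) (n xs))"
  using det_natrec_append[OF assms] by (rule det_ext) (auto simp: nth_append)

lemma natrec_add: "natrec a (\<lambda>i r. Suc r) n = a + n" by (induction n) auto
lemma natrec_mult: "natrec 0 (\<lambda>i r. r + f) n = n * f" by (induction n) auto
lemma natrec_pred: "natrec 0 (\<lambda>i r. i) n = n - 1" by (induction n) auto
lemma natrec_sub: "natrec a (\<lambda>i r. r - Suc 0) n = a - n" by (induction n) auto
lemma natrec_pow: "natrec (Suc 0) (\<lambda>i r. r * f) n = f ^ n" by (induction n) auto
lemma natrec_mod: "natrec 0 (\<lambda>i r. if Suc r = m then 0 else Suc r) n = n mod m"
  by (induction n) (auto simp: mod_Suc)
lemma natrec_sum: "natrec 0 (\<lambda>i r. r + f i) n = (\<Sum>i<n. f i)" by (induction n) auto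

lemma Suc_div_eq: "Suc i div m = (if Suc (i mod m) = m then Suc (i div m) else i div m)"
  by (cases "m = 0") (simp_all add: div_Suc mod_Suc)

lemma natrec_div: "natrec 0 (\<lambda>i r. if Suc (i mod m) = m then Suc r else r) n = n div m"
  by (induction n) (auto simp: Suc_div_eq)

lemma det_add: assumes "det k f" "det k g" shows "det k (\<lambda>xs. f xs + g xs)"
proof -
  have "det k (\<lambda>xs. natrec (f xs) (\<lambda>i r. Suc r) (g xs))"
    by (rule det_natrec[where S="\<lambda>xs i r. Suc r"]) (use assms in \<open>auto intro: det_suc det_proj\<close>)
  then show ?thesis by (simp add: natrec_add)
qed

lemma det_mult: assumes "det k f" "det k g" "0 < k" shows "det k (\<lambda>xs. f xs * g xs)"
proof -
  have "det k (\<lambda>xs. natrec 0 (\<lambda>i r. r + f xs) (g xs))"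
    by (rule det_natrec[where S="\<lambda>xs i r. r + f xs"])
       (use assms in \<open>auto intro!: det_add det_proj det_const det_take[where k=k]\<close>)
  then show ?thesis by (simp add: natrec_mult mult.commute)
qed

lemma det_pred: assumes "det k f" "0 < k" shows "det k (\<lambda>xs. f xs - Suc 0)"
proof -
  have "det k (\<lambda>xs. natrec 0 (\<lambda>i r. i) (f xs))"
    by (rule det_natrec[where S="\<lambda>xs i r. i"]) (use assms in \<open>auto intro!: det_proj det_const\<close>)
  then show ?thesis by (simp add: natrec_pred)
qed

lemma det_sub: assumes "det k f" "det k g" shows "det k (\<lambda>xs. f xs - g xs)"
proof -
  have "det k (\<lambda>xs. natrec (f xs) (\<lambda>i r. r - 1) (g xs))"
    by (rule det_natrec[where S="\<lambda>xs i r. r - 1"]) (use assms in \<open>auto intro!: det_proj det_pred\<close>)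
  then show ?thesis by (simp add: natrec_sub)
qed

lemma det_pow: assumes "det k f" "det k g" "0 < k" shows "det k (\<lambda>xs. f xs ^ g xs)"
proof -
  have "det k (\<lambda>xs. natrec 1 (\<lambda>i r. r * f xs) (g xs))"
    by (rule det_natrec[where S="\<lambda>xs i r. r * f xs"])
       (use assms in \<open>auto intro!: det_mult det_proj det_const det_take[where k=k]\<close>)
  then show ?thesis by (simp add: natrec_pow)
qed

lemma det_if0:
  assumes "det k c" "det k a" "det k b" "0 < k"
  shows "det k (\<lambda>xs. if c xs = 0 then a xs else b xs)"
proof -
  have "det k (\<lambda>xs. a xs * (1 - c xs) + b xs * (1 - (1 - c xs)))"
    using assms by (intro det_add det_mult det_sub det_const) auto
  then show ?thesis by (rule det_ext) auto
qed

definition detP :: "nat \<Rightarrow> (nat list \<Rightarrow> bool) \<Rightarrow> bool" where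
  "detP k P \<longleftrightarrow> det k (\<lambda>xs. if P xs then 1 else 0)"

lemma det_if:
  assumes "detP k P" "det k a" "det k b" "0 < k"
  shows "det k (\<lambda>xs. if P xs then a xs else b xs)"
proof -
  have "det k (\<lambda>xs. if (if P xs then 1 else 0) = (0::nat) then b xs else a xs)"
    using assms unfolding detP_def by (intro det_if0) auto
  then show ?thesis by (rule det_ext) auto
qed

lemma detP_eq: assumes "det k f" "det k g" "0 < k" shows "detP k (\<lambda>xs. f xs = g xs)"
proof -
  have "det k (\<lambda>xs. 1 - ((f xs - g xs) + (g xs - f xs)))"
    using assms by (intro det_add det_sub det_const) auto
  then show ?thesis unfolding detP_def by (rule det_ext) auto
qed

lemma detP_less: assumes "det k f" "det k g" "0 < k" shows "detP k (\<lambda>xs. f xs < g xs)"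
proof -
  have "det k (\<lambda>xs. 1 - (1 - (g xs - f xs)))"
    using assms by (intro det_sub det_const) auto
  then show ?thesis unfolding detP_def by (rule det_ext) auto
qed

lemma detP_not: assumes "detP k P" "0 < k" shows "detP k (\<lambda>xs. \<not> P xs)"
proof -
  have "det k (\<lambda>xs. 1 - (if P xs then 1 else 0))"
    using assms unfolding detP_def by (intro det_sub det_const) auto
  then show ?thesis unfolding detP_def by (rule det_ext) auto
qed

lemma detP_and: assumes "detP k P" "detP k Q" "0 < k" shows "detP k (\<lambda>xs. P xs \<and> Q xs)"
proof -
  have "det k (\<lambda>xs. (if P xs then 1 else 0) * (if Q xs then 1 else 0))"
    using assms unfolding detP_def by (intro det_mult) auto
  then show ?thesis unfolding detP_def by (rule det_ext) auto
qed

lemma detP_le: assumes "det k f" "det k g" "0 < k" shows "detP k (\<lambda>xs. f xs \<le> g xs)"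
  using detP_not[OF detP_less[OF assms(2,1,3)] assms(3)] by (simp add: not_less)

lemma det_mod: assumes "det k n" "det k m" "0 < k" shows "det k (\<lambda>xs. n xs mod m xs)"
proof -
  have "det k (\<lambda>xs. natrec 0 (\<lambda>i r. if Suc r = m xs then 0 else Suc r) (n xs))"
    by (rule det_natrec[where S="\<lambda>xs i r. if Suc r = m xs then 0 else Suc r"])
       (use assms in \<open>auto intro!: det_if detP_eq det_suc det_proj det_const det_take[where k=k]\<close>)
  then show ?thesis by (simp add: natrec_mod)
qed

lemma det_div: assumes "det k n" "det k m" "0 < k" shows "det k (\<lambda>xs. n xs div m xs)"
proof -
  have "det k (\<lambda>xs. natrec 0 (\<lambda>i r. if Suc (i mod m xs) = m xs then Suc r else r) (n xs))"
    by (rule det_natrec[where S="\<lambda>xs i r. if Suc (i mod m xs) = m xs then Suc r else r"])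
       (use assms in \<open>auto intro!: det_if detP_eq det_suc det_mod det_proj det_const det_take[where k=k]\<close>)
  then show ?thesis by (simp add: natrec_div)
qed

lemma det_sum_append:
  assumes "det (Suc k) f" "det k n" "0 < k"
  shows "det k (\<lambda>xs. \<Sum>i<n xs. f (xs @ [i]))"
proof -
  have "det k (\<lambda>xs. natrec 0 (\<lambda>i r. r + f (xs @ [i])) (n xs))"
  proof (rule det_natrec[where S="\<lambda>xs i r. r + f (xs @ [i])"])
    show "det k (\<lambda>xs. 0)" using assms det_const0 by auto
    show "det (Suc (Suc k)) (\<lambda>ys. ys ! Suc k + f (take k ys @ [ys ! k]))"
    proof -
      have "det (Suc (Suc k)) (\<lambda>ys. ys ! Suc k + f (take (Suc k) ys))"
        using assms by (intro det_add det_proj det_take) auto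
      then show ?thesis by (rule det_ext) (simp add: take_Suc_conv_app_nth)
    qed
  qed (use assms in auto)
  then show ?thesis by (simp add: natrec_sum)
qed

text \<open>Any function on a finite initial segment is a finite table, hence deterministic.\<close>
lemma det_table1:
  assumes "det k f" "0 < k"
  shows "det k (\<lambda>xs. if f xs < n then T (f xs) else 0)"
proof (induction n)
  case 0 then show ?case using assms by (simp add: det_const0)
next
  case (Suc n)
  have "det k (\<lambda>xs. (if f xs < n then T (f xs) else 0) + (if f xs = n then T n else 0))"
    using assms by (intro det_add[OF Suc] det_if detP_eq det_const) auto
  then show ?case by (rule det_ext) auto
qed

lemma det_table2:
  assumes "det k f" "det k g" "0 < k"
  shows "det k (\<lambda>xs. if f xs < n \<and> g xs < m then T (f xs) (g xs) else 0)"
proof (induction n)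
  case 0 then show ?case using assms by (simp add: det_const0)
next
  case (Suc n)
  have "det k (\<lambda>xs. (if f xs < n \<and> g xs < m then T (f xs) (g xs) else 0) +
          (if f xs = n then (if g xs < m then T n (g xs) else 0) else 0))"
    using assms by (intro det_add[OF Suc] det_if[OF _ det_table1] detP_eq det_const) auto
  then show ?case by (rule det_ext) auto
qed

lemma det_sum_upto:
  assumes "det (Suc k) (\<lambda>zs. G (take k zs) (zs ! k))" "det k n" "0 < k"
  shows "det k (\<lambda>xs. \<Sum>i<n xs. G xs i)"
  using det_sum_append[OF assms] by (rule det_ext) (simp add: nth_append)

lemma det_boolsplit:
  assumes "detP k P" "det k (F True)" "det k (F False)" "0 < k"
  shows "det k (\<lambda>xs. F (P xs) xs)"
proof -
  have "det k (\<lambda>xs. if P xs then F True xs else F False xs)" using assms by (intro det_if) auto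
  then show ?thesis by (rule det_ext) auto
qed

text \<open>Arbitrary functions of residues are finite tables.\<close>
lemma det_tab1mod:
  assumes "det k f" "0 < k" "0 < m1"
  shows "det k (\<lambda>xs. T (f xs mod m1))"
proof -
  have "det k (\<lambda>xs. if f xs mod m1 < m1 then T (f xs mod m1) else 0)"
    using assms by (intro det_table1 det_mod det_const) auto
  then show ?thesis by (rule det_ext) (use assms in auto)
qed

lemma det_tab2mod:
  assumes "det k f" "det k g" "0 < k" "0 < m1" "0 < m2"
  shows "det k (\<lambda>xs. T (f xs mod m1) (g xs mod m2))"
proof -
  have "det k (\<lambda>xs. if f xs mod m1 < m1 \<and> g xs mod m2 < m2 then T (f xs mod m1) (g xs mod m2) else 0)"
    using assms by (intro det_table2 det_mod det_const) auto
  then show ?thesis by (rule det_ext) (use assms in auto)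
qed

section \<open>Binary words as numbers\<close>

text \<open>bin y is the binary expansion of y + 1 with its leading 1 removed, so its j-th letter is
  a binary digit of y + 1 that is computable by arithmetic.\<close>
definition bin_digit :: "nat \<Rightarrow> nat \<Rightarrow> bool" where
  "bin_digit y j = odd (Suc y div 2 ^ (length (bin y) - Suc j))"

lemma bin_digit_Suc_prefix:
  assumes "j < length (bin (n div 2))"
  shows "bin_digit (Suc n) j = bin_digit (n div 2) j"
proof -
  define L where "L = length (bin (n div 2))"
  have p: "(2::nat) ^ (Suc L - Suc j) = 2 * 2 ^ (L - Suc j)"
    using assms by (simp add: L_def Suc_diff_Suc power_Suc[symmetric] del: power_Suc)
  have e: "Suc (Suc n) div 2 = Suc (n div 2)" by simp
  have "Suc (Suc n) div 2 ^ (Suc L - Suc j) = Suc (n div 2) div 2 ^ (L - Suc j)"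
    unfolding p e[symmetric] by (simp add: div_mult2_eq)
  then show ?thesis unfolding bin_digit_def L_def by simp
qed

lemma bin_digit_Suc_last: "bin_digit (Suc n) (length (bin (n div 2))) = odd n"
  by (simp add: bin_digit_def)

lemma bin_nth: "j < length (bin y) \<Longrightarrow> bin y ! j = bin_digit y j"
proof (induction y arbitrary: j rule: bin.induct)
  case 1 then show ?case by simp
next
  case (2 n)
  show ?case
  proof (cases "j < length (bin (n div 2))")
    case True
    then show ?thesis using 2 by (simp add: nth_append bin_digit_Suc_prefix)
  next
    case False
    then have "j = length (bin (n div 2))" using "2.prems" by simp
    then show ?thesis by (simp add: bin_digit_Suc_last)
  qed
qed

lemma bin_bits: "bin y = map (bin_digit y) [0..<length (bin y)]"
  by (rule nth_equalityI) (simp_all add: bin_nth)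

lemma bin_len_bounds: "2 ^ length (bin y) \<le> Suc y \<and> Suc y < 2 ^ Suc (length (bin y))"
proof (induction y rule: bin.induct)
  case 1 then show ?case by simp
next
  case (2 n)
  have half: "2 * (n div 2) \<le> n" "n \<le> 2 * (n div 2) + 1" by auto
  have len: "length (bin (Suc n)) = Suc (length (bin (n div 2)))" by simp
  show ?case using 2 half unfolding len power_Suc by (intro conjI; linarith)
qed

lemma bin_len_le: "length (bin y) \<le> y"
proof -
  have "length (bin y) < 2 ^ length (bin y)" by (rule less_exp)
  then show ?thesis using bin_len_bounds[of y] by linarith
qed

lemma bin_len_mono: "k \<le> y \<Longrightarrow> length (bin k) \<le> length (bin y)"
proof -
  assume "k \<le> y"
  then have "(2::nat) ^ length (bin k) < 2 ^ Suc (length (bin y))"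
    using bin_len_bounds[of k] bin_len_bounds[of y] by linarith
  then have "length (bin k) < Suc (length (bin y))" by (rule power_less_imp_less_exp[rotated]) simp
  then show ?thesis by simp
qed

lemma pow_le_iff_len: "2 * 2 ^ d \<le> Suc y \<longleftrightarrow> d < length (bin y)"
proof
  assume "2 * 2 ^ d \<le> Suc y"
  then have "(2::nat) ^ Suc d < 2 ^ Suc (length (bin y))"
    using bin_len_bounds[of y] unfolding power_Suc by linarith
  then have "Suc d < Suc (length (bin y))" by (rule power_less_imp_less_exp[rotated]) simp
  then show "d < length (bin y)" by simp
next
  assume "d < length (bin y)"
  then have "(2::nat) ^ Suc d \<le> 2 ^ length (bin y)" by (intro power_increasing) auto
  then show "2 * 2 ^ d \<le> Suc y" using bin_len_bounds[of y] by simp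
qed

text \<open>The length of bin y counts the powers 2^(d+1) not exceeding y + 1: a bounded sum.\<close>
lemma bin_len_sum: "length (bin y) = (\<Sum>d<y. if 2 ^ Suc d \<le> Suc y then 1 else 0)"
proof -
  have "(\<Sum>d<y. if 2 ^ Suc d \<le> Suc y then 1 else (0::nat)) = card ({..<y} \<inter> {d. d < length (bin y)})"
    by (simp add: pow_le_iff_len sum.If_cases)
  also have "{..<y} \<inter> {d. d < length (bin y)} = {..<length (bin y)}"
    using bin_len_le[of y] by auto
  finally show ?thesis by simp
qed

lemma det_binlen:
  assumes "det k f" "0 < k"
  shows "det k (\<lambda>xs. length (bin (f xs)))"
proof -
  have "det k (\<lambda>xs. \<Sum>d<f xs. if 2 ^ Suc d \<le> Suc (f xs) then 1 else 0)"
    using assms by (intro det_sum_upto det_if detP_le det_pow det_suc det_const det_proj det_take[where k=k]) auto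
  then show ?thesis by (rule det_ext) (simp only: bin_len_sum)
qed

lemma detP_bin_digit:
  assumes "det k fy" "det k fj" "0 < k"
  shows "detP k (\<lambda>xs. bin_digit (fy xs) (fj xs))"
proof -
  have "detP k (\<lambda>xs. (Suc (fy xs) div 2 ^ (length (bin (fy xs)) - Suc (fj xs))) mod 2 = 1)"
    using assms by (intro detP_eq det_mod det_div det_pow det_sub det_binlen det_suc det_const) auto
  then show ?thesis unfolding bin_digit_def detP_def by (rule det_ext) (simp add: odd_iff_mod_2_eq_one)
qed

section \<open>Arithmetization of the computation tree\<close>

lemma apply_tr_len: "length (fst (apply_tr M t C)) \<le> Suc (length (fst C))"
  by (cases C; cases t; cases "snd (snd t)") (auto simp: apply_tr_def)

lemma step_len: "length (fst (step M i C)) \<le> Suc (length (fst C))"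
proof -
  have "step M i C = apply_tr M (case C of (s,a,v,q) \<Rightarrow> if i then delta1 M q a else delta0 M q a) C"
    by (cases C) (simp add: step_def)
  then show ?thesis by (simp only: apply_tr_len)
qed

lemma label_step_len: "label_step M (Some C) i = Some C' \<Longrightarrow> length (fst C') \<le> Suc (length (fst C))"
  by (auto simp: label_step_def split: if_splits intro: step_len)

lemma foldl_len:
  "foldl (label_step M) (Some C0) bs = Some C \<Longrightarrow> length (fst C) \<le> length (fst C0) + length bs"
proof (induction bs arbitrary: C rule: rev_induct)
  case Nil then show ?case by simp
next
  case (snoc b bs)
  show ?case
  proof (cases "foldl (label_step M) (Some C0) bs")
    case None then show ?thesis using snoc.prems by (simp add: label_step_None)
  next
    case (Some C1)
    then have "length (fst C) \<le> Suc (length (fst C1))" using snoc.prems label_step_len by simp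
    then show ?thesis using snoc.IH[OF Some] by simp
  qed
qed

lemma init_conf_left: "length (fst (init_conf M w)) = 0"
  by (simp add: init_conf_def split: list.splits)

fun move_code :: "move \<Rightarrow> nat" where
  "move_code Stay = 0" | "move_code MoveR = 1" | "move_code MoveL = 2"

text \<open>A coding of states and symbols by numbers below Q and in the range 1..B-1; symbol codes
  are positive, so that a tape (list of symbols) is coded injectively as a base-B numeral.\<close>
locale tm_code =
  fixes M :: "('q, 's) ptm" and cq :: "'q \<Rightarrow> nat" and cs :: "'s \<Rightarrow> nat" and Q B :: nat
  assumes inj_cq: "inj cq" and cq_lt: "\<And>q. cq q < Q"
    and inj_cs: "inj cs" and cs_pos: "\<And>a. 0 < cs a" and cs_lt: "\<And>a. cs a < B"
begin

lemma Q_pos: "0 < Q" using cq_lt[of undefined] by simp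
lemma B_gt1: "1 < B" using cs_lt[of undefined] cs_pos[of undefined] by simp
lemma cs_ne0[simp]: "cs a \<noteq> 0" using cs_pos[of a] by simp

text \<open>The left tape is read with the cell next to the head as least significant digit, the right
  tape likewise; both codes vanish exactly on the empty tape.\<close>
definition code_left :: "'s list \<Rightarrow> nat" where
  "code_left s = foldl (\<lambda>n c. n * B + cs c) 0 s"

fun code_right :: "'s list \<Rightarrow> nat" where
  "code_right [] = 0" | "code_right (c # v) = cs c + B * code_right v"

lemma code_left_snoc: "code_left (s @ [c]) = code_left s * B + cs c"
  by (simp add: code_left_def)

lemma code_left_Nil[simp]: "code_left [] = 0" by (simp add: code_left_def)

lemma code_left_zero: "code_left s = 0 \<longleftrightarrow> s = []"
proof (cases s rule: rev_cases)
  case (snoc ys y) then show ?thesis using cs_pos[of y] by (simp add: code_left_snoc)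
qed simp

text \<open>A left tape of length at most y has code below B^y, which is the separation bound W used below.\<close>
lemma code_left_lt: "code_left s < B ^ length s"
proof (induction s rule: rev_induct)
  case (snoc x xs)
  have "code_left xs * B + cs x < (code_left xs + 1) * B" using cs_lt[of x] by simp
  also have "\<dots> \<le> B ^ length xs * B" using snoc by (intro mult_right_mono) auto
  finally show ?case by (simp add: code_left_snoc mult.commute)
qed simp

lemma code_left_lt_pow: "length s \<le> y \<Longrightarrow> code_left s < B ^ y"
  using code_left_lt[of s] power_increasing[of "length s" y B] B_gt1 by linarith

lemma code_right_zero: "code_right v = 0 \<longleftrightarrow> v = []"
  by (cases v) auto

lemma code_right_sum: "code_right xs = (\<Sum>j<length xs. cs (xs ! j) * B ^ j)"
proof (induction xs)
  case Nil then show ?case by simp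
next
  case (Cons c xs)
  have "(\<Sum>j<length (c # xs). cs ((c # xs) ! j) * B ^ j) = cs c + (\<Sum>j<length xs. cs (xs ! j) * B ^ Suc j)"
    by (simp only: length_Cons sum.lessThan_Suc_shift) simp
  also have "\<dots> = cs c + B * (\<Sum>j<length xs. cs (xs ! j) * B ^ j)"
    by (simp add: sum_distrib_left algebra_simps)
  finally show ?case using Cons by simp
qed

text \<open>A node label is coded as an even number packing state, scanned symbol, left and right
  tape (with W a bound on the left tape code); a missing node is coded as 1.\<close>
definition pack :: "nat \<Rightarrow> nat \<Rightarrow> nat \<Rightarrow> nat \<Rightarrow> nat \<Rightarrow> nat" where
  "pack W qc a' l r = 2 * (qc + Q * (a' + B * (l + W * r)))"

definition code_label :: "nat \<Rightarrow> ('q, 's) conf option \<Rightarrow> nat" where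
  "code_label W oc = (case oc of None \<Rightarrow> 1
     | Some (s, a, v, q) \<Rightarrow> pack W (cq q) (cs a) (code_left s) (code_right v))"

lemma code_label_None[simp]: "code_label W None = 1" by (simp add: code_label_def)

lemma code_label_Some: "code_label W (Some (s, a, v, q)) = pack W (cq q) (cs a) (code_left s) (code_right v)"
  by (simp add: code_label_def)

definition get_state :: "nat \<Rightarrow> nat" where "get_state n = (n div 2) mod Q"
definition get_sym :: "nat \<Rightarrow> nat" where "get_sym n = (n div 2 div Q) mod B"
definition get_left :: "nat \<Rightarrow> nat \<Rightarrow> nat" where "get_left W n = (n div 2 div Q div B) mod W"
definition get_right :: "nat \<Rightarrow> nat \<Rightarrow> nat" where "get_right W n = n div 2 div Q div B div W"

lemma unpack:
  assumes "qc < Q" "a' < B" "l < W"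
  shows "get_state (pack W qc a' l r) = qc" "get_sym (pack W qc a' l r) = a'"
    "get_left W (pack W qc a' l r) = l" "get_right W (pack W qc a' l r) = r"
    "pack W qc a' l r mod 2 = 0"
  using assms Q_pos B_gt1 by (simp_all add: pack_def get_state_def get_sym_def get_left_def get_right_def)

text \<open>The transition tables on codes; outside the ranges of the codings their values are
  irrelevant.\<close>
definition tr_state :: "bool \<Rightarrow> nat \<Rightarrow> nat \<Rightarrow> nat" where
  "tr_state i qc ac = cq (fst ((if i then delta1 M else delta0 M) (inv cq qc) (inv cs ac)))"
definition tr_sym :: "bool \<Rightarrow> nat \<Rightarrow> nat \<Rightarrow> nat" where
  "tr_sym i qc ac = cs (fst (snd ((if i then delta1 M else delta0 M) (inv cq qc) (inv cs ac))))"
definition tr_move :: "bool \<Rightarrow> nat \<Rightarrow> nat \<Rightarrow> nat" where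
  "tr_move i qc ac = move_code (snd (snd ((if i then delta1 M else delta0 M) (inv cq qc) (inv cs ac))))"
definition final_flag :: "nat \<Rightarrow> nat" where
  "final_flag qc = (if inv cq qc \<in> finals M then 1 else 0)"

definition move_fields :: "nat \<Rightarrow> nat \<Rightarrow> nat \<Rightarrow> nat \<Rightarrow> nat \<Rightarrow> nat \<Rightarrow> nat" where
  "move_fields W qc' b m l r =
     (if m = 0 then pack W qc' b l r
      else if m = 1 then pack W qc' (if r = 0 then cs (blank M) else r mod B) (l * B + b) (r div B)
      else if l = 0 then pack W qc' (cs (blank M)) 0 (b + B * r)
      else pack W qc' (l mod B) (l div B) (b + B * r))"

definition step_fields :: "nat \<Rightarrow> bool \<Rightarrow> nat \<Rightarrow> nat \<Rightarrow> nat \<Rightarrow> nat \<Rightarrow> nat" where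
  "step_fields W i qc a' l r =
     (if r = 0 \<and> final_flag qc = 1 then 1
      else move_fields W (tr_state i qc a') (tr_sym i qc a') (tr_move i qc a') l r)"

definition step_code :: "nat \<Rightarrow> bool \<Rightarrow> nat \<Rightarrow> nat" where
  "step_code W i n = (if n mod 2 = 1 then 1
     else step_fields W i (get_state n) (get_sym n) (get_left W n) (get_right W n))"

lemma step_code_None: "step_code W i (code_label W None) = code_label W None"
  by (simp add: step_code_def)

lemma move_fields_apply_tr:
  "code_label W (Some (apply_tr M (q', b, m) (s, a, v, q)))
     = move_fields W (cq q') (cs b) (move_code m) (code_left s) (code_right v)"
proof (cases m)
  case Stay then show ?thesis by (simp add: apply_tr_def move_fields_def code_label_Some)
next
  case MoveR
  have "(if code_right v = 0 then cs (blank M) else code_right v mod B)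
      = cs (case v of [] \<Rightarrow> blank M | c # _ \<Rightarrow> c)" "code_right v div B = code_right (tl v)"
    by (cases v; use cs_lt B_gt1 in simp)+
  then show ?thesis using MoveR
    by (simp add: apply_tr_def move_fields_def code_label_Some code_left_snoc del: code_right.simps)
next
  case MoveL
  show ?thesis
  proof (cases s rule: rev_cases)
    case Nil then show ?thesis using MoveL by (simp add: apply_tr_def move_fields_def code_label_Some)
  next
    case (snoc s' c)
    then have "code_left s \<noteq> 0" "code_left s mod B = cs c" "code_left s div B = code_left s'"
      using code_left_zero cs_lt[of c] by (simp_all add: code_left_snoc)
    then show ?thesis using MoveL snoc by (simp add: apply_tr_def move_fields_def code_label_Some)
  qed
qed

lemma step_fields_label_step:
  "step_fields W i (cq q) (cs a) (code_left s) (code_right v) = code_label W (label_step M (Some (s, a, v, q)) i)"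
proof -
  obtain q' b m where tr: "(if i then delta1 M else delta0 M) q a = (q', b, m)"
    by (metis prod_cases3)
  have fin: "final_flag (cq q) = 1 \<longleftrightarrow> q \<in> finals M" by (simp add: final_flag_def inv_f_f[OF inj_cq])
  have "step M i (s, a, v, q) = apply_tr M (q', b, m) (s, a, v, q)"
    using tr by (cases i) (simp_all add: step_def)
  moreover have "tr_state i (cq q) (cs a) = cq q'" "tr_sym i (cq q) (cs a) = cs b"
    "tr_move i (cq q) (cs a) = move_code m"
    using tr by (simp_all add: tr_state_def tr_sym_def tr_move_def inv_f_f[OF inj_cq] inv_f_f[OF inj_cs])
  ultimately show ?thesis using fin
    by (simp add: step_fields_def label_step_def final_conf_def code_right_zero move_fields_apply_tr)
qed

lemma step_code_Some:
  assumes "code_left s < W"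
  shows "step_code W i (code_label W (Some (s, a, v, q))) = code_label W (label_step M (Some (s, a, v, q)) i)"
  using unpack[OF cq_lt cs_lt assms] by (simp add: code_label_Some step_code_def step_fields_label_step)

text \<open>Along a path of length at most y from a configuration with empty left tape, the bound
  W = B^y is never exceeded, so iterating step_code follows the path.\<close>
lemma natrec_step_code:
  assumes "n \<le> y" "length (fst C0) = 0"
  shows "natrec (code_label (B ^ y) (Some C0)) (\<lambda>j r. step_code (B ^ y) (bin_digit y' j) r) n
       = code_label (B ^ y) (foldl (label_step M) (Some C0) (map (bin_digit y') [0..<n]))"
  using assms(1)
proof (induction n)
  case 0 then show ?case by simp
next
  case (Suc n)
  then have IH: "natrec (code_label (B ^ y) (Some C0)) (\<lambda>j r. step_code (B ^ y) (bin_digit y' j) r) n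
       = code_label (B ^ y) (foldl (label_step M) (Some C0) (map (bin_digit y') [0..<n]))" by simp
  show ?case
  proof (cases "foldl (label_step M) (Some C0) (map (bin_digit y') [0..<n])")
    case None
    then show ?thesis using IH step_code_None by (simp add: label_step_None)
  next
    case (Some C)
    obtain s a v q where C: "C = (s, a, v, q)" by (metis prod_cases4)
    have "length s \<le> n" using foldl_len[OF Some] assms(2) C by simp
    then have "code_left s < B ^ y" using Suc.prems by (intro code_left_lt_pow) simp
    then show ?thesis using IH Some C by (simp add: step_code_Some)
  qed
qed

lemma natrec_label:
  "natrec (code_label (B ^ y) (Some (init_conf M (bin x)))) (\<lambda>j r. step_code (B ^ y) (bin_digit y j) r)
       (length (bin y)) = code_label (B ^ y) (label M x (bin y))"
  using natrec_step_code[OF bin_len_le[of y] init_conf_left, where y'=y]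
  unfolding label_foldl bin_bits[symmetric] .

lemma leaf_iff_code:
  "leaf M x y \<longleftrightarrow> (let n = code_label (B ^ y) (label M x (bin y))
                    in n mod 2 = 0 \<and> get_right (B ^ y) n = 0 \<and> final_flag (get_state n) = 1)"
proof (cases "label M x (bin y)")
  case None
  then show ?thesis by (simp add: leaf_def)
next
  case (Some C)
  obtain s a v q where C: "C = (s, a, v, q)" by (metis prod_cases4)
  have "length s \<le> length (bin y)"
    using foldl_len[OF Some[unfolded label_foldl]] init_conf_left[of M "bin x"] C by simp
  then have "code_left s < B ^ y" using bin_len_le[of y] by (intro code_left_lt_pow) simp
  then show ?thesis using Some C unpack[OF cq_lt cs_lt]
    by (simp add: leaf_def code_label_Some final_conf_def code_right_zero final_flag_def inv_f_f[OF inj_cq])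
qed

definition init_sym :: "nat \<Rightarrow> nat" where
  "init_sym x = (if length (bin x) = 0 then cs (blank M) else cs (bitsym M (bin_digit x 0)))"
definition init_right :: "nat \<Rightarrow> nat" where
  "init_right x = (\<Sum>j<length (bin x) - 1. cs (bitsym M (bin_digit x (Suc j))) * B ^ j)"

lemma code_init_conf:
  "code_label W (Some (init_conf M (bin x))) = pack W (cq (start M)) (init_sym x) 0 (init_right x)"
proof (cases "bin x")
  case Nil
  then show ?thesis by (simp add: init_conf_def code_label_Some init_sym_def init_right_def)
next
  case (Cons a v)
  have a: "a = bin_digit x 0" using bin_nth[of 0 x] Cons by simp
  have v: "v ! j = bin_digit x (Suc j)" if "j < length v" for j
    using that Cons bin_nth[of "Suc j" x] by simp
  have "code_right (map (bitsym M) v) = init_right x"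
    unfolding code_right_sum init_right_def using Cons by (simp add: v)
  then show ?thesis using Cons a by (simp add: init_conf_def code_label_Some init_sym_def)
qed

lemma det_tr_state:
  "detP k P \<Longrightarrow> det k f \<Longrightarrow> det k g \<Longrightarrow> 0 < k \<Longrightarrow> det k (\<lambda>xs. tr_state (P xs) (f xs mod Q) (g xs mod B))"
  by (rule det_boolsplit[where F="\<lambda>b xs. tr_state b (f xs mod Q) (g xs mod B)"])
     (auto intro!: det_tab2mod simp: Q_pos B_gt1[THEN less_trans[OF zero_less_one]])

lemma det_tr_sym:
  "detP k P \<Longrightarrow> det k f \<Longrightarrow> det k g \<Longrightarrow> 0 < k \<Longrightarrow> det k (\<lambda>xs. tr_sym (P xs) (f xs mod Q) (g xs mod B))"
  by (rule det_boolsplit[where F="\<lambda>b xs. tr_sym b (f xs mod Q) (g xs mod B)"])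
     (auto intro!: det_tab2mod simp: Q_pos B_gt1[THEN less_trans[OF zero_less_one]])

lemma det_tr_move:
  "detP k P \<Longrightarrow> det k f \<Longrightarrow> det k g \<Longrightarrow> 0 < k \<Longrightarrow> det k (\<lambda>xs. tr_move (P xs) (f xs mod Q) (g xs mod B))"
  by (rule det_boolsplit[where F="\<lambda>b xs. tr_move b (f xs mod Q) (g xs mod B)"])
     (auto intro!: det_tab2mod simp: Q_pos B_gt1[THEN less_trans[OF zero_less_one]])

lemma det_final_flag: "det k f \<Longrightarrow> 0 < k \<Longrightarrow> det k (\<lambda>xs. final_flag (f xs mod Q))"
  by (rule det_tab1mod) (auto simp: Q_pos)

lemma det_step_code:
  assumes "det k fW" "detP k fb" "det k fn" "0 < k"
  shows "det k (\<lambda>xs. step_code (fW xs) (fb xs) (fn xs))"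
  unfolding step_code_def step_fields_def move_fields_def pack_def get_state_def get_sym_def
    get_left_def get_right_def
  using assms
  by (intro det_if detP_eq detP_and det_add det_mult det_div det_mod det_const
        det_tr_state det_tr_sym det_tr_move det_final_flag) auto

lemma det_init_sym: "det k f \<Longrightarrow> 0 < k \<Longrightarrow> det k (\<lambda>xs. init_sym (f xs))"
  unfolding init_sym_def
  by (intro det_if detP_eq det_binlen det_const det_boolsplit[where F="\<lambda>b xs. cs (bitsym M b)"]
      detP_bin_digit) auto

lemma det_init_right: "det k f \<Longrightarrow> 0 < k \<Longrightarrow> det k (\<lambda>xs. init_right (f xs))"
  unfolding init_right_def
  by (intro det_sum_upto det_mult det_pow det_sub det_binlen det_const det_proj det_suc detP_bin_digit
        det_boolsplit[where F="\<lambda>b xs. cs (bitsym M b)"] det_take[where k=k]) auto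

definition label_code :: "nat \<Rightarrow> nat \<Rightarrow> nat" where
  "label_code x y = natrec (pack (B ^ y) (cq (start M)) (init_sym x) 0 (init_right x))
      (\<lambda>j r. step_code (B ^ y) (bin_digit y j) r) (length (bin y))"

lemma label_code_eq: "label_code x y = code_label (B ^ y) (label M x (bin y))"
  unfolding label_code_def code_init_conf[symmetric] by (rule natrec_label)

lemma det_label_code:
  assumes "det k fx" "det k fy" "0 < k"
  shows "det k (\<lambda>xs. label_code (fx xs) (fy xs))"
  unfolding label_code_def
proof (rule det_natrec[where S="\<lambda>xs j r. step_code (B ^ fy xs) (bin_digit (fy xs) j) r"])
  show "det k (\<lambda>xs. pack (B ^ fy xs) (cq (start M)) (init_sym (fx xs)) 0 (init_right (fx xs)))"
    unfolding pack_def using assms by (intro det_add det_mult det_pow det_const det_init_sym det_init_right) auto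
  show "det (Suc (Suc k)) (\<lambda>ys. step_code (B ^ fy (take k ys)) (bin_digit (fy (take k ys)) (ys ! k)) (ys ! Suc k))"
    using assms by (intro det_step_code det_pow det_const detP_bin_digit det_proj det_take[where k=k]) auto
  show "det k (\<lambda>xs. length (bin (fy xs)))" using assms by (intro det_binlen)
qed

lemma detP_leaf:
  assumes "det k fx" "det k fy" "0 < k"
  shows "detP k (\<lambda>xs. leaf M (fx xs) (fy xs))"
  unfolding leaf_iff_code Let_def label_code_eq[symmetric] get_right_def get_state_def
  using assms by (intro detP_and detP_eq det_mod det_div det_pow det_label_code det_final_flag det_const) auto

end

section \<open>Sampling PTC\<close>

text \<open>For a leaf y, 2^|bin y| * PTprod(x,y) is a positive natural number, because all leaves
  before y are at most as deep as y.\<close>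
definition leaf_denom :: "('q, 's) ptm \<Rightarrow> nat \<Rightarrow> nat \<Rightarrow> nat" where
  "leaf_denom M x y = 2 ^ length (bin y)
     - (\<Sum>k<y. if leaf M x k then 2 ^ (length (bin y) - length (bin k)) else 0)"

lemma leaf_mass_scaled:
  "real (\<Sum>k<y. if leaf M x k then (2::nat) ^ (length (bin y) - length (bin k)) else 0)
     = 2 ^ length (bin y) * leaf_mass M x y"
  unfolding of_nat_sum leaf_mass_def sum_distrib_left
proof (rule sum.cong)
  fix k assume "k \<in> {..<y}"
  then have "length (bin k) \<le> length (bin y)" by (intro bin_len_mono) simp
  then have "(2::real) ^ (length (bin y) - length (bin k)) = 2 ^ length (bin y) / 2 ^ length (bin k)"
    by (simp add: power_diff)
  then show "real (if leaf M x k then 2 ^ (length (bin y) - length (bin k)) else 0)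
      = 2 ^ length (bin y) * (if leaf M x k then PT k else 0)"
    by (simp add: PT_eq power_one_over)
qed simp

text \<open>By Kraft's inequality the denominator is positive and PT0 = 2^-|bin y| / PTprod is its reciprocal.\<close>
lemma leaf_denom_props:
  assumes "leaf M x y"
  shows "leaf_denom M x y \<ge> 1" "PT0 M x y = 1 / real (leaf_denom M x y)"
proof -
  define L where "L = length (bin y)"
  define S where "S = (\<Sum>k<y. if leaf M x k then (2::nat) ^ (L - length (bin k)) else 0)"
  have S: "real S = 2 ^ L * leaf_mass M x y" unfolding S_def L_def by (rule leaf_mass_scaled)
  have "2 ^ L * (leaf_mass M x y + PT y) \<le> 2 ^ L * 1"
    using kraft_leaves[OF assms] by (intro mult_left_mono) auto
  then have "real S + 1 \<le> real ((2::nat) ^ L)" using S by (simp add: PT_eq L_def distrib_left power_one_over)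
  then have le: "S + 1 \<le> 2 ^ L" by linarith
  have denom: "leaf_denom M x y = 2 ^ L - S" unfolding leaf_denom_def L_def S_def by simp
  then show "leaf_denom M x y \<ge> 1" using le by simp
  have "real (leaf_denom M x y) = 2 ^ L * PTprod M x y"
    using le S unfolding denom PTprod_leaf_mass by (simp add: of_nat_diff right_diff_distrib)
  then show "PT0 M x y = 1 / real (leaf_denom M x y)"
    using PTprod_nonzero[OF assms] by (simp add: PT0_def assms PT_eq L_def power_one_over field_simps)
qed

text \<open>recip_digits N j is the number formed by the first j digits of the
  non-terminating binary expansion of 1/N; its last bit is the j-th digit.\<close>
definition recip_digits :: "nat \<Rightarrow> nat \<Rightarrow> nat" where "recip_digits N j = (2 ^ j - 1) div N"

lemma recip_digits_Suc: "recip_digits N (Suc j) = 2 * recip_digits N j + recip_digits N (Suc j) mod 2"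
proof -
  have o: "(1::nat) \<le> 2 ^ j" by simp
  have e: "(2::nat) ^ Suc j - 1 = 2 * (2 ^ j - 1) + 1"
    using o by (simp only: power_Suc)
  have "recip_digits N (Suc j) div 2 = recip_digits N j"
  proof -
    have "(2 * (2 ^ j - 1) + 1) div N div 2 = (2 * (2 ^ j - 1) + 1) div 2 div (N::nat)"
      by (metis div_mult2_eq mult.commute)
    then show ?thesis unfolding recip_digits_def e by simp
  qed
  then show ?thesis using div_mult_mod_eq[of "recip_digits N (Suc j)" 2] by linarith
qed

lemma recip_digits_partial_sum: "(\<Sum>t<n. real (recip_digits N (Suc t) mod 2) * (1/2) ^ Suc t) = real (recip_digits N n) / 2 ^ n"
proof (induction n)
  case 0 then show ?case by (simp add: recip_digits_def)
next
  case (Suc n)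
  have "real (recip_digits N (Suc n)) = real (2 * recip_digits N n + recip_digits N (Suc n) mod 2)"
    using recip_digits_Suc[of N n] by (rule arg_cong)
  then have "real (recip_digits N (Suc n)) = 2 * real (recip_digits N n) + real (recip_digits N (Suc n) mod 2)" by simp
  then show ?case using Suc by (simp add: field_simps)
qed

lemma recip_digits_bounds:
  assumes "N \<ge> 1"
  shows "real (recip_digits N n) \<le> (2 ^ n - 1) / N" "(2 ^ n - 1) / N - 1 < real (recip_digits N n)"
proof -
  have p: "real (2 ^ n - 1 :: nat) = 2 ^ n - 1" using one_le_power[of "2::nat" n] by (simp add: of_nat_diff)
  have a0: "recip_digits N n * N \<le> 2 ^ n - 1" unfolding recip_digits_def by (rule div_times_less_eq_dividend)
  then have "real (recip_digits N n * N) \<le> real (2 ^ n - 1 :: nat)" by (simp only: of_nat_le_iff)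
  then have a: "real (recip_digits N n) * N \<le> 2 ^ n - 1" using p by simp
  have b: "2 ^ n - 1 < (real (recip_digits N n) + 1) * N"
  proof -
    have e1: "2 ^ n - 1 = recip_digits N n * N + (2 ^ n - 1) mod N" unfolding recip_digits_def by simp
    have e2: "(2 ^ n - 1) mod N < N" using assms by simp
    have e3: "(recip_digits N n + 1) * N = recip_digits N n * N + N" by simp
    have "2 ^ n - 1 < (recip_digits N n + 1) * N" using e1 e2 e3 by linarith
    then have "real (2 ^ n - 1 :: nat) < real ((recip_digits N n + 1) * N)" by (simp only: of_nat_less_iff)
    then show ?thesis using p by (simp add: algebra_simps)
  qed
  show "real (recip_digits N n) \<le> (2 ^ n - 1) / N" using a assms by (simp add: field_simps)
  show "(2 ^ n - 1) / N - 1 < real (recip_digits N n)" using b assms by (simp add: field_simps)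
qed

lemma recip_digits_tendsto:
  assumes "N \<ge> 1"
  shows "(\<lambda>n. real (recip_digits N n) / 2 ^ n) \<longlonglongrightarrow> 1 / N"
proof (rule tendsto_sandwich[where f="\<lambda>n. 1/N - (1/N) * (1/2)^n - (1/2)^n" and h="\<lambda>n. 1/N - (1/N) * (1/2)^n"])
  have z: "(\<lambda>n. (1/2::real)^n) \<longlonglongrightarrow> 0" by (rule LIMSEQ_power_zero) simp
  have "(\<lambda>n. 1/N - (1/N) * (1/2)^n - (1/2)^n) \<longlonglongrightarrow> 1/N - (1/N) * 0 - 0"
    by (intro tendsto_diff tendsto_mult tendsto_const z)
  then show "(\<lambda>n. 1/N - (1/N) * (1/2)^n - (1/2)^n) \<longlonglongrightarrow> 1 / real N" by simp
  have "(\<lambda>n. 1/N - (1/N) * (1/2)^n) \<longlonglongrightarrow> 1/N - (1/N) * 0"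
    by (intro tendsto_diff tendsto_mult tendsto_const z)
  then show "(\<lambda>n. 1/N - (1/N) * (1/2)^n) \<longlonglongrightarrow> 1 / real N" by simp
  have pos: "(0::real) < 2 ^ n" for n :: nat by simp
  show "\<forall>\<^sub>F n in sequentially. 1/N - (1/N) * (1/2)^n - (1/2)^n \<le> real (recip_digits N n) / 2 ^ n"
  proof (intro always_eventually allI)
    fix n
    have "(2 ^ n - 1) / N - 1 < real (recip_digits N n)" by (rule recip_digits_bounds(2)[OF assms])
    then have "((2 ^ n - 1) / N - 1) / 2 ^ n \<le> real (recip_digits N n) / 2 ^ n"
      by (intro divide_right_mono) auto
    moreover have "((2 ^ n - 1) / N - 1) / 2 ^ n = 1/N - (1/N) * (1/2)^n - (1/2)^n"
      using assms by (simp add: field_simps power_one_over)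
    ultimately show "1/N - (1/N) * (1/2)^n - (1/2)^n \<le> real (recip_digits N n) / 2 ^ n" by simp
  qed
  show "\<forall>\<^sub>F n in sequentially. real (recip_digits N n) / 2 ^ n \<le> 1/N - (1/N) * (1/2)^n"
  proof (intro always_eventually allI)
    fix n
    have "real (recip_digits N n) \<le> (2 ^ n - 1) / N" by (rule recip_digits_bounds(1)[OF assms])
    then have "real (recip_digits N n) / 2 ^ n \<le> ((2 ^ n - 1) / N) / 2 ^ n"
      by (intro divide_right_mono) auto
    moreover have "((2 ^ n - 1) / N) / 2 ^ n = 1/N - (1/N) * (1/2)^n"
      using assms by (simp add: field_simps power_one_over)
    ultimately show "real (recip_digits N n) / 2 ^ n \<le> 1/N - (1/N) * (1/2)^n" by simp
  qed
qed

lemma recip_digits_sums: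
  assumes "N \<ge> 1"
  shows "(\<lambda>t. real (recip_digits N (Suc t) mod 2) * (1/2) ^ Suc t) sums (1 / N)"
  unfolding sums_def recip_digits_partial_sum using recip_digits_tendsto[OF assms] .

definition coin :: "nat list \<Rightarrow> nat \<Rightarrow> real" where
  "coin xs k = (if k = 0 \<or> k = 1 then 1/2 else 0)"

lemma PR_coin:
  assumes "0 < k"
  shows "PR k coin"
proof -
  define rand :: "nat list \<Rightarrow> nat \<Rightarrow> real" where "rand = (\<lambda>xs y. if y = hd xs \<or> y = hd xs + 1 then 1 / 2 else (0::real))"
  have "PR k (comp_pf rand [\<lambda>xs. dirac 0])"
    using PR.rand det_const0[OF assms] unfolding det_def rand_def by (intro PR.comp) auto
  moreover have "comp_pf rand [\<lambda>xs. dirac 0] = coin"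
  proof (intro HOL.ext)
    fix xs :: "nat list" and y :: nat
    have "comp_pf rand [\<lambda>xs. dirac 0] xs y
        = (\<Sum>\<^sub>\<infinity>zs\<in>{zs. length zs = 1}. rand zs y * dirac 0 (zs ! 0))"
      unfolding comp_pf_def by simp
    also have "\<dots> = rand [0] y * dirac 0 ([0] ! 0)"
    proof (rule infsum_single)
      fix zs :: "nat list" assume "zs \<in> {zs. length zs = 1}" "zs \<noteq> [0]"
      then obtain a where "zs = [a]" "a \<noteq> 0" by (cases zs) auto
      then show "rand zs y * dirac 0 (zs ! 0) = 0" by (simp add: dirac_def)
    qed simp
    finally show "comp_pf rand [\<lambda>xs. dirac 0] xs y = coin xs y" by (simp add: rand_def coin_def dirac_def)
  qed
  ultimately show ?thesis by simp
qed

lemma geometric_val: "mu_pf coin xs t = (1/2) ^ Suc t"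
proof -
  have h: "(\<Sum>\<^sub>\<infinity>k\<in>{0<..}. coin ys k) = 1/2" for ys
    by (subst infsum_single[where a=1]) (auto simp: coin_def)
  show ?thesis by (simp add: mu_pf_def h coin_def[of _ 0])
qed

lemma geom_half_sums: "(\<lambda>t. (1/2::real) ^ Suc t) sums 1"
proof -
  have "(\<lambda>t. (1/2::real) * (1/2) ^ t) sums ((1/2) * (1 / (1 - 1/2)))"
    by (intro sums_mult geometric_sums) simp
  then show ?thesis by simp
qed

definition sampler_bit :: "('q, 's) ptm \<Rightarrow> nat list \<Rightarrow> nat" where
  "sampler_bit M xs = (if leaf M (xs ! 0) (xs ! 1)
     \<and> recip_digits (leaf_denom M (xs ! 0) (xs ! 1)) (Suc (xs ! 2)) mod 2 = 1 then 0 else 1)"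

definition PTC_sampler :: "('q, 's) ptm \<Rightarrow> nat list \<Rightarrow> nat \<Rightarrow> real" where
  "PTC_sampler M = comp_pf (\<lambda>zs. dirac (sampler_bit M zs))
     [\<lambda>xs. dirac (xs ! 0), \<lambda>xs. dirac (xs ! 1), mu_pf coin]"

lemma PTC_sampler_val:
  "PTC_sampler M [x, y] w = (\<Sum>\<^sub>\<infinity>t. dirac (sampler_bit M [x, y, t]) w * (1/2) ^ Suc t)"
proof -
  let ?gs = "[\<lambda>xs. dirac (xs ! 0), \<lambda>xs. dirac (xs ! 1), mu_pf coin]"
  let ?f = "\<lambda>zs. dirac (sampler_bit M zs) w * (\<Prod>i<length ?gs. (?gs ! i) [x, y] (zs ! i))"
  have f: "?f zs = dirac (sampler_bit M zs) w * (dirac x (zs ! 0) * dirac y (zs ! 1) * (1/2) ^ Suc (zs ! 2))" for zs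
    by (simp add: numeral_3_eq_3 numeral_2_eq_2 lessThan_Suc geometric_val)
  have "PTC_sampler M [x, y] w = infsum ?f {zs. length zs = 3}"
    unfolding PTC_sampler_def comp_pf_def by (simp add: numeral_3_eq_3)
  also have "\<dots> = infsum ?f (range (\<lambda>t. [x, y, t]))"
  proof (rule infsum_cong_neutral)
    fix zs assume "zs \<in> {zs. length zs = 3} - range (\<lambda>t. [x, y, t])"
    then obtain a b c where zs: "zs = [a, b, c]" "a \<noteq> x \<or> b \<noteq> y"
      by (cases zs; cases "tl zs"; cases "tl (tl zs)") (auto simp: numeral_3_eq_3)
    then show "?f zs = 0" unfolding f by (auto simp: dirac_def)
  qed auto
  also have "\<dots> = infsum (?f \<circ> (\<lambda>t. [x, y, t])) UNIV"
    by (rule infsum_reindex) (auto simp: inj_on_def)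
  also have "\<dots> = (\<Sum>\<^sub>\<infinity>t. dirac (sampler_bit M [x, y, t]) w * (1/2) ^ Suc t)"
    by (rule infsum_cong) (simp add: f dirac_def geometric_val)
  finally show ?thesis .
qed

definition zero_event :: "('q, 's) ptm \<Rightarrow> nat \<Rightarrow> nat \<Rightarrow> nat \<Rightarrow> real" where
  "zero_event M x y t = (if leaf M x y \<and> recip_digits (leaf_denom M x y) (Suc t) mod 2 = 1 then 1 else 0)"

lemma zero_event_sums: "(\<lambda>t. zero_event M x y t * (1/2) ^ Suc t) sums PT0 M x y"
proof (cases "leaf M x y")
  case True
  have "real (m mod 2) = (if m mod 2 = 1 then 1 else 0)" for m :: nat
    by (cases "m mod 2 = 1") (auto simp: mod2_eq_if split: if_splits)
  then have "zero_event M x y t = real (recip_digits (leaf_denom M x y) (Suc t) mod 2)" for t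
    using True by (simp add: zero_event_def)
  then show ?thesis using recip_digits_sums[OF leaf_denom_props(1)[OF True]]
    by (simp add: leaf_denom_props(2)[OF True])
next
  case False
  then show ?thesis by (simp add: zero_event_def PT0_def)
qed

lemma one_event_sums: "(\<lambda>t. (1 - zero_event M x y t) * (1/2) ^ Suc t) sums PT1 M x y"
proof -
  have "PT1 M x y = 1 - PT0 M x y" by (simp add: PT1_def PT0_def)
  then show ?thesis
    unfolding left_diff_distrib mult_1 using sums_diff[OF geom_half_sums zero_event_sums[of M x y]] by simp
qed

lemma has_sum_of_sums:
  assumes "f sums s" "\<And>n. 0 \<le> f n"
  shows "infsum f UNIV = (s::real)"
  using sums_nonneg_imp_has_sum[OF assms] by (rule infsumI)

lemma PTC_sampler_PTC: "PTC_sampler M [x, y] = PTC M x y"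
proof
  fix w
  have bit: "dirac (sampler_bit M [x, y, t]) w
      = (if w = 0 then zero_event M x y t else if w = 1 then 1 - zero_event M x y t else 0)" for t
    by (simp add: dirac_def sampler_bit_def zero_event_def)
  have sum0: "(\<Sum>\<^sub>\<infinity>t. zero_event M x y t * (1/2) ^ Suc t) = PT0 M x y"
    by (rule has_sum_of_sums[OF zero_event_sums]) (simp add: zero_event_def)
  have sum1: "(\<Sum>\<^sub>\<infinity>t. (1 - zero_event M x y t) * (1/2) ^ Suc t) = PT1 M x y"
    by (rule has_sum_of_sums[OF one_event_sums]) (simp add: zero_event_def)
  consider "w = 0" | "w = 1" | "w \<ge> 2" by linarith
  then show "PTC_sampler M [x, y] w = PTC M x y w"
  proof cases
    case 1
    then show ?thesis unfolding PTC_sampler_val bit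
      using sum0 by (simp add: PTC_def)
  next
    case 2
    then show ?thesis unfolding PTC_sampler_val bit
      using sum1 by (simp add: PTC_def)
  next
    case 3
    then show ?thesis unfolding PTC_sampler_val bit by (simp add: PTC_def)
  qed
qed

section \<open>PTC and CF are in PR\<close>

context tm_code
begin

lemma det_leaf_denom:
  assumes "det k fx" "det k fy" "0 < k"
  shows "det k (\<lambda>xs. leaf_denom M (fx xs) (fy xs))"
  unfolding leaf_denom_def
  using assms by (intro det_sub det_pow det_const det_binlen det_sum_upto det_if detP_leaf det_proj
     det_take[where k=k]) auto

lemma det_sampler_bit: "det 3 (sampler_bit M)"
  unfolding sampler_bit_def recip_digits_def
  by (intro det_if detP_and detP_leaf detP_eq det_mod det_div det_sub det_pow det_leaf_denom
      det_proj det_const det_suc) auto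

lemma PR_PTC_sampler: "PR 2 (PTC_sampler M)"
  unfolding PTC_sampler_def
proof (rule PR.comp)
  show "PR (length [\<lambda>xs. dirac (xs ! 0), \<lambda>xs. dirac (xs ! 1), mu_pf coin]) (\<lambda>zs. dirac (sampler_bit M zs))"
    using det_sampler_bit unfolding det_def by (simp add: eval_nat_numeral)
  have "PR 2 (\<lambda>xs. dirac (xs ! 0))" "PR 2 (\<lambda>xs. dirac (xs ! 1))"
    using det_proj[of 0 2] det_proj[of 1 2] unfolding det_def by auto
  moreover have "PR 2 (mu_pf coin)" using PR.mini[of 2 coin] PR_coin[of 3] by simp
  ultimately show "\<forall>g\<in>set [\<lambda>xs. dirac (xs ! 0), \<lambda>xs. dirac (xs ! 1), mu_pf coin]. PR 2 g"
    by auto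
qed

lemma PR_PTC: "PR 2 (\<lambda>xs. PTC M (xs ! 0) (xs ! 1))"
proof (rule PR.ext[OF PR_PTC_sampler], intro allI impI)
  fix xs :: "nat list" assume "length xs = 2"
  then obtain x y where "xs = [x, y]"
    by (cases xs; cases "tl xs") (auto simp: numeral_2_eq_2)
  then show "PTC M (xs ! 0) (xs ! 1) = PTC_sampler M xs" by (simp add: PTC_sampler_PTC)
qed

lemma PR_CF: "PR 1 (\<lambda>xs. CF M (hd xs))"
proof -
  have "PR (1 + 1) (\<lambda>xs. PTC M (xs ! 0) (xs ! 1))" using PR_PTC by (simp only: one_add_one)
  then have "PR 1 (mu_pf (\<lambda>xs. PTC M (xs ! 0) (xs ! 1)))" by (rule PR.mini)
  then show ?thesis
  proof (rule PR.ext, intro allI impI)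
    fix xs :: "nat list" assume "length xs = 1"
    then obtain x where "xs = [x]" by (cases xs) auto
    then show "CF M (hd xs) = mu_pf (\<lambda>xs. PTC M (xs ! 0) (xs ! 1)) xs" by (simp add: CF_eq_mu_PTC)
  qed
qed

end

lemma tm_code_exists: "\<exists>(cq :: 'q::finite \<Rightarrow> nat) (cs :: 's::finite \<Rightarrow> nat) Q B. tm_code cq cs Q B"
proof -
  obtain f :: "'q \<Rightarrow> nat" and n where f: "f ` UNIV = {i. i < n}" "inj f"
    using finite_imp_inj_to_nat_seg[of "UNIV :: 'q set"] by auto
  obtain g :: "'s \<Rightarrow> nat" and m where g: "g ` UNIV = {i. i < m}" "inj g"
    using finite_imp_inj_to_nat_seg[of "UNIV :: 's set"] by auto
  have "tm_code f (\<lambda>a. Suc (g a)) n (Suc m)"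
    using f g by unfold_locales (auto simp: inj_on_def)
  then show ?thesis by blast
qed

theorem mainTheorem11:
  fixes M :: "('q::finite, 's::finite) ptm"
  assumes "is_ptm M"
  shows "CF M = (\<lambda>x. mu_pf (\<lambda>xs. PTC M (xs ! 0) (xs ! 1)) [x])
         \<and> PR 1 (\<lambda>xs. CF M (hd xs))"
proof
  show "CF M = (\<lambda>x. mu_pf (\<lambda>xs. PTC M (xs ! 0) (xs ! 1)) [x])"
    by (rule HOL.ext) (rule CF_eq_mu_PTC)
  obtain cq :: "'q \<Rightarrow> nat" and cs :: "'s \<Rightarrow> nat" and Q B where "tm_code cq cs Q B"
    using tm_code_exists by blast
  then show "PR 1 (\<lambda>xs. CF M (hd xs))" by (rule tm_code.PR_CF)
qed

end
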